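(* There are polynomials $p_1,p_2$ such that the following holds. Let $P=\{x\in\mathbb{R}^n:Ax\le b\}$ be a nonempty polyhedron with $A,b$ rational, and let $\mathcal{Z}\subseteq\mathbb{R}^n$ be the linear subspace spanned by pairwise orthogonal rational vectors $x^1,\dots,x^k$. Let $x^*\in P$. Then there is $x'\in P$ with $x'_{\mathcal{Z}}=x^*_{\mathcal{Z}}$ and \[ \|x'\|\le p_1\!\left(\|x^*_{\mathcal{Z}}\|,\,2^{p_2(\langle P\rangle,\mathrm{bl}(\mathcal{Z}))}\right), \] where $\mathrm{bl}(\mathcal{Z})=\mathrm{bl}(x^1)+\dots+\mathrm{bl}(x^k)$.
   Context: $x_{\mathcal{Z}}$ is the orthogonal projection of $x$ onto $\mathcal{Z}$. Bit lengths: $\mathrm{bl}(k)=\max\{1,\lceil\log_2|k|\rceil\}$ for integers, $\mathrm{bl}(p/q)=\mathrm{bl}(p)+\mathrm{bl}(q)$ for reduced fractions, summed over entries for vectors and matrices. $\langle P\rangle=\mathrm{bl}(A)+\mathrm{bl}(b)$ (with $\langle P\rangle\ge n$ if $P=\mathbb{R}^n$). *)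

theory Defs
  imports "Jordan_Normal_Form.Matrix"
begin

definition bl_int :: "int \<Rightarrow> nat" where
  "bl_int k = nat (max 1 \<lceil>log 2 (real_of_int \<bar>k\<bar>)\<rceil>)"

definition bl_rat :: "rat \<Rightarrow> nat" where
  "bl_rat r = (case quotient_of r of (p, q) \<Rightarrow> bl_int p + bl_int q)"

definition bl_vec :: "rat vec \<Rightarrow> nat" where
  "bl_vec v = (\<Sum>i<dim_vec v. bl_rat (v $ i))"

definition bl_mat :: "rat mat \<Rightarrow> nat" where
  "bl_mat A = (\<Sum>i<dim_row A. \<Sum>j<dim_col A. bl_rat (A $$ (i, j)))"

text \<open>Encoding size of P = {x. A x <= b} in R^n; the max with n realises the
  convention that the size is at least n when P = R^n (m = 0 rows).\<close>
definition enc_poly :: "nat \<Rightarrow> rat mat \<Rightarrow> rat vec \<Rightarrow> nat" where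
  "enc_poly n A b = max n (bl_mat A + bl_vec b)"

definition bl_list :: "rat vec list \<Rightarrow> nat" where
  "bl_list xs = (\<Sum>v\<leftarrow>xs. bl_vec v)"

definition polyhedron :: "nat \<Rightarrow> rat mat \<Rightarrow> rat vec \<Rightarrow> real vec set" where
  "polyhedron n A b = {x \<in> carrier_vec n. map_mat of_rat A *\<^sub>v x \<le> map_vec of_rat b}"

definition lin_span :: "nat \<Rightarrow> rat vec list \<Rightarrow> real vec set" where
  "lin_span n xs = {vec n (\<lambda>j. \<Sum>i<length xs. c i * of_rat (xs ! i $ j)) | c :: nat \<Rightarrow> real. True}"

definition orth_proj :: "nat \<Rightarrow> real vec set \<Rightarrow> real vec \<Rightarrow> real vec" where
  "orth_proj n Z x = (THE y. y \<in> Z \<and> (\<forall>z\<in>Z. (x - y) \<bullet> z = 0))"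

definition vnorm :: "real vec \<Rightarrow> real" where
  "vnorm x = sqrt (x \<bullet> x)"

definition poly2 :: "(nat \<Rightarrow> nat \<Rightarrow> real) \<Rightarrow> nat \<Rightarrow> real \<Rightarrow> real \<Rightarrow> real" where
  "poly2 c d x y = (\<Sum>i\<le>d. \<Sum>j\<le>d. c i j * x ^ i * y ^ j)"

end

theory Submission
  imports Defs "Jordan_Normal_Form.Determinant"
begin

text \<open>The points of P with the same projection onto Z as x* form the polyhedron
  {x. A x \<le> b and x \<bullet> x^l = x* \<bullet> x^l for all l}. Since x* \<bullet> x^l = x*_Z \<bullet> x^l, clearing
  denominators turns it into an integer system whose coefficients are at most 2^O(N) and whose
  right-hand sides are at most 2^O(N) (1 + |x*_Z|), where N is the total bit length.

  A feasible integer system a x \<le> b has a small solution: take a feasible x maximising the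
  number of tight rows plus the number of zero coordinates. No nonzero direction keeps all
  tight rows tight and all zero coordinates zero, since moving along it would make a new row
  tight or a new coordinate vanish. Hence the Gram matrix of the tight rows restricted to the
  support of x, completed by the identity off the support, is a nonsingular integer matrix
  that maps x to a vector built from b alone, and Cramer's rule bounds the coordinates of x.\<close>

section \<open>Bit lengths\<close>

lemma abs_le_two_power_bl_int: "\<bar>real_of_int p\<bar> \<le> 2 ^ bl_int p"
proof (cases "p = 0")
  case False
  have "log 2 \<bar>real_of_int p\<bar> \<le> real_of_int \<lceil>log 2 \<bar>real_of_int p\<bar>\<rceil>" by (rule le_of_int_ceiling)
  also have "\<dots> \<le> real (bl_int p)" unfolding bl_int_def by simp
  finally have "2 powr log 2 \<bar>real_of_int p\<bar> \<le> 2 powr real (bl_int p)" by simp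
  with False show ?thesis by (simp add: powr_realpow)
qed simp

lemma bl_int_ge_1: "1 \<le> bl_int k"
  unfolding bl_int_def by simp

lemma bl_rat_ge_1: "1 \<le> bl_rat r"
  unfolding bl_rat_def using bl_int_ge_1 by (simp split: prod.split add: add_increasing2)

lemma bl_rat_bounds:
  "\<bar>real_of_rat r\<bar> \<le> 2 ^ bl_rat r" "real_of_int (snd (quotient_of r)) \<le> 2 ^ bl_rat r"
proof -
  obtain p q where pq: "quotient_of r = (p, q)" by fastforce
  have q: "1 \<le> q" using quotient_of_denom_pos[OF pq] by simp
  have bl: "bl_rat r = bl_int p + bl_int q" unfolding bl_rat_def pq by simp
  have "\<bar>real_of_rat r\<bar> = \<bar>real_of_int p\<bar> / real_of_int q"
    using q unfolding quotient_of_div[OF pq] by (simp add: of_rat_divide abs_divide)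
  also have "\<dots> \<le> \<bar>real_of_int p\<bar>" using q by (simp add: divide_le_eq mult_le_cancel_left1)
  also have "\<dots> \<le> 2 ^ bl_int p" by (rule abs_le_two_power_bl_int)
  also have "\<dots> \<le> 2 ^ bl_rat r" unfolding bl by (intro power_increasing) auto
  finally show "\<bar>real_of_rat r\<bar> \<le> 2 ^ bl_rat r" .
  have "real_of_int (snd (quotient_of r)) = \<bar>real_of_int q\<bar>" using q pq by simp
  also have "\<dots> \<le> 2 ^ bl_int q" by (rule abs_le_two_power_bl_int)
  also have "\<dots> \<le> 2 ^ bl_rat r" unfolding bl by (intro power_increasing) auto
  finally show "real_of_int (snd (quotient_of r)) \<le> 2 ^ bl_rat r" .
qed

lemma abs_of_rat_le_two_power: "bl_rat r \<le> k \<Longrightarrow> \<bar>real_of_rat r\<bar> \<le> 2 ^ k"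
  by (rule order_trans[OF bl_rat_bounds(1) power_increasing]) auto

lemma common_denominator:
  fixes f :: "nat \<Rightarrow> nat \<Rightarrow> rat"
  obtains D :: int where "0 < D" "real_of_int D \<le> 2 ^ (\<Sum>i<p. \<Sum>j<q. bl_rat (f i j))"
    "\<And>i j. i < p \<Longrightarrow> j < q \<Longrightarrow> real_of_int D * of_rat (f i j) \<in> \<int>"
proof
  let ?den = "\<lambda>i j. snd (quotient_of (f i j))"
  define D where "D = (\<Prod>i<p. \<Prod>j<q. ?den i j)"
  show "0 < D" unfolding D_def by (intro prod_pos) (auto intro: quotient_of_denom_pos')
  have "real_of_int D = (\<Prod>i<p. \<Prod>j<q. real_of_int (?den i j))" unfolding D_def by simp
  also have "\<dots> \<le> (\<Prod>i<p. \<Prod>j<q. 2 ^ bl_rat (f i j))"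
    using quotient_of_denom_pos' bl_rat_bounds(2)
    by (intro prod_mono conjI prod_nonneg) (auto intro: less_imp_le)
  also have "\<dots> = 2 ^ (\<Sum>i<p. \<Sum>j<q. bl_rat (f i j))" by (simp add: power_sum)
  finally show "real_of_int D \<le> 2 ^ (\<Sum>i<p. \<Sum>j<q. bl_rat (f i j))" .
  fix i j assume "i < p" "j < q"
  then have "?den i j dvd D"
    unfolding D_def by (meson dvd_prodI dvd_trans finite_lessThan lessThan_iff)
  moreover obtain a d where ad: "quotient_of (f i j) = (a, d)" by fastforce
  ultimately obtain t where t: "D = d * t" by auto
  have "real_of_int D * of_rat (f i j) = of_int (t * a)"
    using t quotient_of_denom_pos[OF ad] unfolding quotient_of_div[OF ad] by (simp add: of_rat_divide)
  then show "real_of_int D * of_rat (f i j) \<in> \<int>" by simp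
qed

lemma bl_vec_index: "i < dim_vec v \<Longrightarrow> bl_rat (v $ i) \<le> bl_vec v"
  unfolding bl_vec_def by (rule member_le_sum) auto

lemma dim_vec_le_bl_vec: "dim_vec v \<le> bl_vec v"
  unfolding bl_vec_def using sum_mono[of "{..<dim_vec v}" "\<lambda>_. 1" "\<lambda>i. bl_rat (v $ i)"] bl_rat_ge_1
  by simp

lemma bl_mat_index: "i < dim_row A \<Longrightarrow> j < dim_col A \<Longrightarrow> bl_rat (A $$ (i, j)) \<le> bl_mat A"
  unfolding bl_mat_def
  by (rule order_trans[OF member_le_sum member_le_sum[where f = "\<lambda>i. \<Sum>j<dim_col A. bl_rat (A $$ (i, j))"]]) auto

lemma bl_list_sum: "bl_list xs = (\<Sum>l<length xs. bl_vec (xs ! l))"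
  unfolding bl_list_def by (simp add: sum_list_sum_nth atLeast0LessThan)

lemma bl_list_nth: "l < length xs \<Longrightarrow> bl_vec (xs ! l) \<le> bl_list xs"
  unfolding bl_list_sum by (rule member_le_sum) auto

lemma length_le_bl_list:
  assumes "set xs \<subseteq> carrier_vec n" "0 < n"
  shows "length xs \<le> bl_list xs"
proof -
  have "1 \<le> bl_vec (xs ! l)" if "l < length xs" for l
    using dim_vec_le_bl_vec[of "xs ! l"] assms that by (force dest: nth_mem)
  then show ?thesis
    unfolding bl_list_sum using sum_mono[of "{..<length xs}" "\<lambda>_. 1" "\<lambda>l. bl_vec (xs ! l)"] by simp
qed

section \<open>Real vectors and determinants\<close>

lemma scalar_prod_self_nonneg: "0 \<le> (v :: real vec) \<bullet> v"
  unfolding scalar_prod_def by (auto intro: sum_nonneg)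

lemma scalar_prod_self_eq_0:
  assumes "(v :: real vec) \<in> carrier_vec n" "v \<bullet> v = 0"
  shows "v = 0\<^sub>v n"
  using assms unfolding scalar_prod_def by (auto simp: sum_nonneg_eq_0_iff intro!: eq_vecI)

lemma scalar_prod_map_of_rat:
  "v \<in> carrier_vec n \<Longrightarrow> w \<in> carrier_vec n \<Longrightarrow>
    map_vec of_rat v \<bullet> map_vec of_rat w = (of_rat (v \<bullet> w) :: real)"
  unfolding scalar_prod_def by (simp add: of_rat_sum of_rat_mult)

lemma scalar_prod_map_of_rat_right:
  "v \<in> carrier_vec n \<Longrightarrow> x \<bullet> map_vec of_rat v = (\<Sum>j<n. of_rat (v $ j) * x $ j)"
  unfolding scalar_prod_def by (auto simp: lessThan_atLeast0 mult.commute intro: sum.cong)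

lemma abs_index_le_vnorm:
  assumes "j < dim_vec x"
  shows "\<bar>x $ j\<bar> \<le> vnorm x"
proof -
  have "(x $ j)\<^sup>2 \<le> x \<bullet> x"
    unfolding scalar_prod_def power2_eq_square using assms by (intro member_le_sum) auto
  then show ?thesis unfolding vnorm_def using real_sqrt_le_mono by fastforce
qed

lemma vnorm_le_of_abs_le:
  assumes x: "x \<in> carrier_vec n" and le: "\<And>j. j < n \<Longrightarrow> \<bar>x $ j\<bar> \<le> C"
  shows "vnorm x \<le> n * C"
proof (cases "n = 0")
  case False
  then have C: "0 \<le> C" using le[of 0] by linarith
  have "x \<bullet> x = (\<Sum>j<n. \<bar>x $ j\<bar>\<^sup>2)"
    using x unfolding scalar_prod_def by (simp add: lessThan_atLeast0 power2_eq_square)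
  also have "\<dots> \<le> (\<Sum>j<n. C\<^sup>2)" using le by (intro sum_mono power_mono) auto
  also have "\<dots> = n * C\<^sup>2" by simp
  also have "\<dots> \<le> n * n * C\<^sup>2" using False by (intro mult_right_mono) auto
  also have "\<dots> = (n * C)\<^sup>2" by (simp add: power2_eq_square)
  finally have "sqrt (x \<bullet> x) \<le> sqrt ((n * C)\<^sup>2)" by (rule real_sqrt_le_mono)
  with C show ?thesis by (simp add: vnorm_def)
qed (use x in \<open>simp add: vnorm_def scalar_prod_def\<close>)

lemma abs_scalar_prod_le:
  fixes u w :: "real vec" and U W :: real
  assumes w: "w \<in> carrier_vec n" and u_le: "\<And>j. j < n \<Longrightarrow> \<bar>u $ j\<bar> \<le> U"
    and w_le: "\<And>j. j < n \<Longrightarrow> \<bar>w $ j\<bar> \<le> W"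
  shows "\<bar>u \<bullet> w\<bar> \<le> n * (U * W)"
proof -
  have "\<bar>u \<bullet> w\<bar> \<le> (\<Sum>j<n. \<bar>u $ j\<bar> * \<bar>w $ j\<bar>)"
    using w unfolding scalar_prod_def by (simp add: lessThan_atLeast0 abs_mult[symmetric] sum_abs)
  also have "\<dots> \<le> (\<Sum>j<n. U * W)"
    using u_le w_le by (intro sum_mono mult_mono) (auto intro: order_trans[OF abs_ge_zero])
  finally show ?thesis by simp
qed

lemma index_mat_mult_vec:
  "p < n \<Longrightarrow> v \<in> carrier_vec n \<Longrightarrow> (mat n n f *\<^sub>v v) $ p = (\<Sum>q<n. f (p, q) * v $ q)"
  unfolding mult_mat_vec_def scalar_prod_def by (auto intro!: sum.cong simp: lessThan_atLeast0)

lemma det_Ints: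
  assumes B: "(B :: real mat) \<in> carrier_mat n n" and ints: "\<forall>i<n. \<forall>j<n. B $$ (i, j) \<in> \<int>"
  shows "det B \<in> \<int>"
  unfolding det_def'[OF B]
proof (intro Ints_sum Ints_mult Ints_prod)
  fix p i assume "p \<in> {p. p permutes {0..<n}}" "i \<in> {0..<n}"
  then show "B $$ (i, p i) \<in> \<int>" using ints by (auto simp: permutes_in_image)
qed auto

lemma abs_det_le:
  assumes B: "(B :: real mat) \<in> carrier_mat n n" and bound: "\<forall>i<n. \<forall>j<n. \<bar>B $$ (i, j)\<bar> \<le> h"
  shows "\<bar>det B\<bar> \<le> fact n * h ^ n"
proof -
  have "\<bar>det B\<bar> \<le> (\<Sum>p | p permutes {0..<n}. \<bar>signof p * (\<Prod>i = 0..<n. B $$ (i, p i))\<bar>)"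
    unfolding det_def'[OF B] by (rule sum_abs)
  also have "\<dots> \<le> (\<Sum>p | p permutes {0..<n}. h ^ n)"
  proof (rule sum_mono)
    fix p assume p: "p \<in> {p. p permutes {0..<n}}"
    have "\<bar>signof p * (\<Prod>i = 0..<n. B $$ (i, p i))\<bar> = (\<Prod>i = 0..<n. \<bar>B $$ (i, p i)\<bar>)"
      by (simp add: abs_mult abs_prod sign_def)
    also have "\<dots> \<le> (\<Prod>i = 0..<n. h)"
      using p bound by (intro prod_mono) (auto simp: permutes_in_image)
    finally show "\<bar>signof p * (\<Prod>i = 0..<n. B $$ (i, p i))\<bar> \<le> h ^ n" by simp
  qed
  also have "\<dots> = fact n * h ^ n" by (simp add: card_permutations)
  finally show ?thesis .
qed

lemma abs_index_le_by_cramer: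
  fixes G :: "real mat"
  assumes G: "G \<in> carrier_mat n n" and ints: "\<forall>i<n. \<forall>j<n. G $$ (i, j) \<in> \<int>" and det: "det G \<noteq> 0"
    and entries: "\<forall>i<n. \<forall>j<n. \<bar>G $$ (i, j)\<bar> \<le> h"
    and v: "v \<in> carrier_vec n" and image: "\<forall>i<n. \<bar>(G *\<^sub>v v) $ i\<bar> \<le> h" and k: "k < n"
  shows "\<bar>v $ k\<bar> \<le> fact n * h ^ n"
proof -
  have "\<bar>v $ k\<bar> \<le> \<bar>v $ k\<bar> * \<bar>det G\<bar>"
    using Ints_nonzero_abs_ge1[OF det_Ints[OF G ints] det] by (simp add: mult_le_cancel_left1)
  also have "\<dots> = \<bar>det (replace_col G (G *\<^sub>v v) k)\<bar>"
    by (simp add: cramer_lemma_mat[OF G v k] abs_mult)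
  also have "\<dots> \<le> fact n * h ^ n"
    using G entries image by (intro abs_det_le) (auto simp: replace_col_def)
  finally show ?thesis .
qed

section \<open>Projection onto the span of orthogonal rational vectors\<close>

lemma lin_span_intro: "vec n (\<lambda>j. \<Sum>i<length xs. c i * of_rat (xs ! i $ j)) \<in> lin_span n xs"
  unfolding lin_span_def by auto

lemma lin_span_carrier: "w \<in> lin_span n xs \<Longrightarrow> w \<in> carrier_vec n"
  unfolding lin_span_def by auto

lemma scalar_prod_lin_span_vec:
  fixes u :: "real vec" and c :: "nat \<Rightarrow> real"
  assumes "set xs \<subseteq> carrier_vec n"
  shows "u \<bullet> vec n (\<lambda>j. \<Sum>i<length xs. c i * of_rat (xs ! i $ j)) =
    (\<Sum>i<length xs. c i * (u \<bullet> map_vec of_rat (xs ! i)))"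
proof -
  have "dim_vec (xs ! i) = n" if "i < length xs" for i using assms that by (auto dest: nth_mem)
  then have "u \<bullet> map_vec of_rat (xs ! i) = (\<Sum>j<n. u $ j * of_rat (xs ! i $ j))" if "i < length xs" for i
    using that by (simp add: scalar_prod_def lessThan_atLeast0)
  then have "(\<Sum>i<length xs. c i * (u \<bullet> map_vec of_rat (xs ! i))) =
      (\<Sum>i<length xs. \<Sum>j<n. u $ j * (c i * of_rat (xs ! i $ j)))"
    by (simp add: sum_distrib_left mult_ac)
  also have "\<dots> = u \<bullet> vec n (\<lambda>j. \<Sum>i<length xs. c i * of_rat (xs ! i $ j))"
    by (subst sum.swap) (simp add: scalar_prod_def lessThan_atLeast0 sum_distrib_left)
  finally show ?thesis ..
qed

lemma orthogonal_lin_span: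
  assumes "set xs \<subseteq> carrier_vec n" "w \<in> lin_span n xs"
    and "\<And>l. l < length xs \<Longrightarrow> u \<bullet> map_vec of_rat (xs ! l) = 0"
  shows "u \<bullet> w = 0"
  using assms scalar_prod_lin_span_vec[OF assms(1)] unfolding lin_span_def by auto

lemma lin_span_diff:
  assumes "y \<in> lin_span n xs" "y' \<in> lin_span n xs"
  shows "y - y' \<in> lin_span n xs"
proof -
  obtain c c' where "y = vec n (\<lambda>j. \<Sum>i<length xs. c i * of_rat (xs ! i $ j))"
    "y' = vec n (\<lambda>j. \<Sum>i<length xs. c' i * of_rat (xs ! i $ j))"
    using assms unfolding lin_span_def by blast
  then have "y - y' = vec n (\<lambda>j. \<Sum>i<length xs. (c i - c' i) * of_rat (xs ! i $ j))"
    by (auto simp: left_diff_distrib sum_subtractf)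
  then show ?thesis by (simp add: lin_span_intro)
qed

lemma orth_proj_eqI:
  assumes xs: "set xs \<subseteq> carrier_vec n" and x: "x \<in> carrier_vec n" and y: "y \<in> lin_span n xs"
    and perp: "\<And>l. l < length xs \<Longrightarrow> (x - y) \<bullet> map_vec of_rat (xs ! l) = 0"
  shows "orth_proj n (lin_span n xs) x = y"
  unfolding orth_proj_def
proof (rule the_equality)
  show "y \<in> lin_span n xs \<and> (\<forall>w\<in>lin_span n xs. (x - y) \<bullet> w = 0)"
    using y orthogonal_lin_span[OF xs _ perp] by blast
  fix y' assume y': "y' \<in> lin_span n xs \<and> (\<forall>w\<in>lin_span n xs. (x - y') \<bullet> w = 0)"
  define d where "d = y' - y"
  have d: "d \<in> lin_span n xs" unfolding d_def using y y' by (simp add: lin_span_diff)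
  have carrier: "y \<in> carrier_vec n" "y' \<in> carrier_vec n" "d \<in> carrier_vec n"
    using y y' d by (auto intro: lin_span_carrier)
  have "(x - y) - (x - y') = d" unfolding d_def by (rule eq_vecI) (use x carrier in auto)
  then have "d \<bullet> d = (x - y) \<bullet> d - (x - y') \<bullet> d"
    using minus_scalar_prod_distrib[of "x - y" n "x - y'" d] x carrier by simp
  also have "\<dots> = 0" using orthogonal_lin_span[OF xs d perp] y' d by simp
  finally have "d = 0\<^sub>v n" using carrier by (intro scalar_prod_self_eq_0) auto
  then have "y' $ j = y $ j" if "j < n" for j
    using that carrier unfolding d_def by (metis carrier_vecD eq_iff_diff_eq_0 index_minus_vec(1) index_zero_vec(1))
  then show "y' = y" using carrier by (intro eq_vecI) auto
qed

lemma orth_proj_orthogonal_list: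
  assumes xs: "set xs \<subseteq> carrier_vec n"
    and orth: "\<forall>i<length xs. \<forall>j<length xs. i \<noteq> j \<longrightarrow> xs ! i \<bullet> xs ! j = 0"
    and x: "x \<in> carrier_vec n"
  shows "orth_proj n (lin_span n xs) x \<in> lin_span n xs \<and>
    (\<forall>l<length xs. orth_proj n (lin_span n xs) x \<bullet> map_vec of_rat (xs ! l) = x \<bullet> map_vec of_rat (xs ! l))"
proof -
  define g :: "nat \<Rightarrow> real vec" where "g l = map_vec of_rat (xs ! l)" for l
  have g: "g l \<in> carrier_vec n" if "l < length xs" for l
    using xs that unfolding g_def by (auto dest: nth_mem)
  have g_orth: "g l \<bullet> g i = 0" if "i < length xs" "l < length xs" "i \<noteq> l" for i l
  proof -
    have "xs ! l \<in> carrier_vec n" "xs ! i \<in> carrier_vec n" using xs that by (auto dest: nth_mem)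
    then show ?thesis using that orth unfolding g_def by (simp add: scalar_prod_map_of_rat)
  qed
  define c where "c l = (x \<bullet> g l) / (g l \<bullet> g l)" for l
  define y where "y = vec n (\<lambda>j. \<Sum>i<length xs. c i * of_rat (xs ! i $ j))"
  have y: "y \<in> lin_span n xs" unfolding y_def by (rule lin_span_intro)
  have y_g: "y \<bullet> g l = x \<bullet> g l" if l: "l < length xs" for l
  proof -
    have "y \<bullet> g l = g l \<bullet> y" using g[OF l] y lin_span_carrier by (metis comm_scalar_prod)
    also have "\<dots> = (\<Sum>i<length xs. c i * (g l \<bullet> g i))"
      unfolding y_def g_def by (rule scalar_prod_lin_span_vec[OF xs])
    also have "\<dots> = (\<Sum>i<length xs. if i = l then c l * (g l \<bullet> g l) else 0)"
      using g_orth l by (intro sum.cong) auto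
    also have "\<dots> = c l * (g l \<bullet> g l)" using l by simp
    also have "\<dots> = x \<bullet> g l"
    proof (cases "g l \<bullet> g l = 0")
      case True
      then have "g l = 0\<^sub>v n" using g[OF l] by (rule scalar_prod_self_eq_0[rotated])
      with True x show ?thesis by simp
    qed (simp add: c_def)
    finally show ?thesis .
  qed
  have "orth_proj n (lin_span n xs) x = y"
  proof (rule orth_proj_eqI[OF xs x y])
    fix l assume "l < length xs"
    with y_g g x y lin_span_carrier show "(x - y) \<bullet> map_vec of_rat (xs ! l) = 0"
      unfolding g_def by (simp add: minus_scalar_prod_distrib)
  qed
  with y y_g show ?thesis by (simp add: g_def)
qed

lemma orth_proj_cong:
  assumes xs: "set xs \<subseteq> carrier_vec n"
    and orth: "\<forall>i<length xs. \<forall>j<length xs. i \<noteq> j \<longrightarrow> xs ! i \<bullet> xs ! j = 0"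
    and x: "x \<in> carrier_vec n" and x': "x' \<in> carrier_vec n"
    and same: "\<And>l. l < length xs \<Longrightarrow> x \<bullet> map_vec of_rat (xs ! l) = x' \<bullet> map_vec of_rat (xs ! l)"
  shows "orth_proj n (lin_span n xs) x = orth_proj n (lin_span n xs) x'"
proof (rule orth_proj_eqI[OF xs x])
  let ?y = "orth_proj n (lin_span n xs) x'"
  show y: "?y \<in> lin_span n xs" using orth_proj_orthogonal_list[OF xs orth x'] by blast
  fix l assume l: "l < length xs"
  have "map_vec real_of_rat (xs ! l) \<in> carrier_vec n" using xs l by (auto dest: nth_mem)
  then show "(x - ?y) \<bullet> map_vec of_rat (xs ! l) = 0"
    using orth_proj_orthogonal_list[OF xs orth x'] same[OF l] l x lin_span_carrier[OF y]
    by (simp add: minus_scalar_prod_distrib)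
qed

section \<open>Small solutions of integer systems of inequalities\<close>

locale ineq_system =
  fixes a :: "nat \<Rightarrow> nat \<Rightarrow> real" and b :: "nat \<Rightarrow> real" and m n :: nat
begin

definition lhs :: "(nat \<Rightarrow> real) \<Rightarrow> nat \<Rightarrow> real" where
  "lhs x i = (\<Sum>j<n. a i j * x j)"

definition feasible :: "(nat \<Rightarrow> real) \<Rightarrow> bool" where
  "feasible x \<longleftrightarrow> (\<forall>i<m. lhs x i \<le> b i)"

definition tight_rows :: "(nat \<Rightarrow> real) \<Rightarrow> nat set" where
  "tight_rows x = {i. i < m \<and> lhs x i = b i}"

definition zero_coords :: "(nat \<Rightarrow> real) \<Rightarrow> nat set" where
  "zero_coords x = {j. j < n \<and> x j = 0}"

definition active_count :: "(nat \<Rightarrow> real) \<Rightarrow> nat" where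
  "active_count x = card (tight_rows x) + card (zero_coords x)"

lemma lhs_add_scaled: "lhs (\<lambda>j. x j + t * u j) i = lhs x i + t * lhs u i"
  unfolding lhs_def by (simp add: algebra_simps sum.distrib sum_distrib_left)

lemma feasible_vec: "feasible (\<lambda>j. vec n x $ j) \<longleftrightarrow> feasible x"
proof -
  have "lhs (\<lambda>j. vec n x $ j) i = lhs x i" for i
    unfolding lhs_def by (intro sum.cong) auto
  then show ?thesis unfolding feasible_def by simp
qed

lemma finite_tight_rows: "finite (tight_rows x)"
  unfolding tight_rows_def by simp

lemma finite_zero_coords: "finite (zero_coords x)"
  unfolding zero_coords_def by simp

lemma active_count_less_bound: "active_count x < m + n + 1"
proof -
  have "card (tight_rows x) \<le> card {..<m}" unfolding tight_rows_def by (rule card_mono) auto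
  moreover have "card (zero_coords x) \<le> card {..<n}" unfolding zero_coords_def by (rule card_mono) auto
  ultimately show ?thesis unfolding active_count_def by simp
qed

lemma maximal_feasible_exists:
  assumes "feasible x0"
  obtains x where "feasible x" "\<And>y. feasible y \<Longrightarrow> active_count y \<le> active_count x"
  using ex_has_greatest_nat[of feasible x0 active_count "m + n + 1"] assms active_count_less_bound
  by blast

lemma active_count_strict_mono:
  assumes "tight_rows x \<subseteq> tight_rows y" "zero_coords x \<subseteq> zero_coords y"
    and "tight_rows x \<noteq> tight_rows y \<or> zero_coords x \<noteq> zero_coords y"
  shows "active_count x < active_count y"
  using assms psubset_card_mono[OF finite_tight_rows] psubset_card_mono[OF finite_zero_coords]
    card_mono[OF finite_tight_rows] card_mono[OF finite_zero_coords]
  unfolding active_count_def by (metis add_le_less_mono add_less_le_mono psubsetI)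

lemma feasible_step:
  assumes feas: "feasible x" and t: "0 \<le> t"
    and t_le: "\<And>i. i < m \<Longrightarrow> 0 < lhs u i \<Longrightarrow> t \<le> (b i - lhs x i) / lhs u i"
  shows "feasible (\<lambda>j. x j + t * u j)"
  unfolding feasible_def
proof (intro allI impI)
  fix i assume i: "i < m"
  show "lhs (\<lambda>j. x j + t * u j) i \<le> b i"
  proof (cases "0 < lhs u i")
    case True
    with t_le[OF i] show ?thesis unfolding lhs_add_scaled by (simp add: le_divide_eq)
  next
    case False
    then have "t * lhs u i \<le> 0" using t by (simp add: mult_nonneg_nonpos)
    with feas i show ?thesis unfolding lhs_add_scaled feasible_def by force
  qed
qed

text \<open>Walking from x along u until a new row becomes tight or, at the latest for t = 1,
  the coordinate j0 vanishes.\<close>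

lemma active_count_increase:
  assumes feas: "feasible x"
    and u_tight: "\<And>i. i \<in> tight_rows x \<Longrightarrow> lhs u i = 0"
    and u_zero: "\<And>j. j \<in> zero_coords x \<Longrightarrow> u j = 0"
    and j0: "j0 < n" "x j0 \<noteq> 0" "x j0 + u j0 = 0"
  shows "\<exists>y. feasible y \<and> active_count x < active_count y"
proof -
  define C where "C = insert 1 ((\<lambda>i. (b i - lhs x i) / lhs u i) ` {i. i < m \<and> lhs u i > 0})"
  define t where "t = Min C"
  have finC: "finite C" unfolding C_def by auto
  have tC: "t \<in> C" unfolding t_def using finC C_def by (intro Min_in) auto
  have t_le: "t \<le> c" if "c \<in> C" for c unfolding t_def using finC that by auto
  have "0 \<le> t"
    using tC feas unfolding C_def feasible_def by (auto intro!: divide_nonneg_pos)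
  define y where "y = (\<lambda>j. x j + t * u j)"
  have "feasible y" unfolding y_def using feas \<open>0 \<le> t\<close> by (rule feasible_step) (auto simp: C_def t_le)
  moreover have "active_count x < active_count y"
  proof (rule active_count_strict_mono)
    show "tight_rows x \<subseteq> tight_rows y"
      using u_tight unfolding y_def tight_rows_def lhs_add_scaled by (auto simp: tight_rows_def)
    show "zero_coords x \<subseteq> zero_coords y"
      unfolding y_def using u_zero by (auto simp: zero_coords_def)
    show "tight_rows x \<noteq> tight_rows y \<or> zero_coords x \<noteq> zero_coords y"
    proof (cases "t = 1")
      case True
      then have "j0 \<in> zero_coords y - zero_coords x"
        using j0 unfolding zero_coords_def y_def by auto
      then show ?thesis by blast
    next
      case False
      then obtain i where i: "i < m" "lhs u i > 0" "t = (b i - lhs x i) / lhs u i"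
        using tC unfolding C_def by auto
      then have "i \<in> tight_rows y - tight_rows x"
        using u_tight unfolding tight_rows_def y_def lhs_add_scaled by force
      then show ?thesis by blast
    qed
  qed
  ultimately show ?thesis by blast
qed

lemma maximal_feasible_rigid:
  assumes feas: "feasible x"
    and maximal: "\<And>y. feasible y \<Longrightarrow> active_count y \<le> active_count x"
    and v_zero: "\<And>j. j \<in> zero_coords x \<Longrightarrow> v j = 0"
    and v_tight: "\<And>i. i \<in> tight_rows x \<Longrightarrow> lhs v i = 0"
    and j: "j < n"
  shows "v j = 0"
proof (rule ccontr)
  assume "v j \<noteq> 0"
  moreover from this have "x j \<noteq> 0" using v_zero j unfolding zero_coords_def by auto
  define s where "s = - x j / v j"
  have "\<exists>y. feasible y \<and> active_count x < active_count y"
  proof (rule active_count_increase[OF feas _ _ j \<open>x j \<noteq> 0\<close>, where u = "\<lambda>j. s * v j"])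
    show "lhs (\<lambda>j. s * v j) i = 0" if "i \<in> tight_rows x" for i
      using lhs_add_scaled[of "\<lambda>_. 0" s v i] v_tight[OF that] by (simp add: lhs_def)
  qed (use v_zero \<open>v j \<noteq> 0\<close> in \<open>auto simp: s_def\<close>)
  with maximal show False by (meson not_le)
qed

definition gram :: "nat set \<Rightarrow> nat set \<Rightarrow> nat \<Rightarrow> nat \<Rightarrow> real" where
  "gram T J p q = (if p \<in> J \<and> q \<in> J then \<Sum>i\<in>T. a i p * a i q else 0) + (if p = q \<and> p \<notin> J then 1 else 0)"

lemma gram_apply:
  assumes J: "J \<subseteq> {..<n}" and p: "p < n"
  shows "(\<Sum>q<n. gram T J p q * w q) = (if p \<in> J then \<Sum>i\<in>T. a i p * (\<Sum>q\<in>J. a i q * w q) else w p)"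
proof (cases "p \<in> J")
  case True
  have "(\<Sum>q<n. gram T J p q * w q) = (\<Sum>q<n. if q \<in> J then (\<Sum>i\<in>T. a i p * a i q) * w q else 0)"
    using True by (intro sum.cong) (auto simp: gram_def)
  also have "\<dots> = (\<Sum>q\<in>J. \<Sum>i\<in>T. a i p * (a i q * w q))"
    using J by (simp add: sum.inter_restrict[symmetric] Int_absorb1 sum_distrib_right mult.assoc)
  also have "\<dots> = (\<Sum>i\<in>T. a i p * (\<Sum>q\<in>J. a i q * w q))"
    by (subst sum.swap) (simp add: sum_distrib_left)
  finally show ?thesis using True by simp
next
  case False
  then have "(\<Sum>q<n. gram T J p q * w q) = (\<Sum>q<n. if q = p then w p else 0)"
    by (intro sum.cong) (auto simp: gram_def)
  with False p show ?thesis by simp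
qed

lemma gram_quadratic_form:
  assumes J: "J \<subseteq> {..<n}"
  shows "(\<Sum>p<n. w p * (\<Sum>q<n. gram T J p q * w q)) =
    (\<Sum>i\<in>T. (\<Sum>q\<in>J. a i q * w q)\<^sup>2) + (\<Sum>p\<in>{..<n} - J. (w p)\<^sup>2)"
proof -
  have "(\<Sum>p<n. w p * (\<Sum>q<n. gram T J p q * w q)) =
      (\<Sum>p<n. if p \<in> J then w p * (\<Sum>i\<in>T. a i p * (\<Sum>q\<in>J. a i q * w q)) else (w p)\<^sup>2)"
    using J by (intro sum.cong) (auto simp: gram_apply power2_eq_square)
  also have "\<dots> = (\<Sum>p\<in>J. w p * (\<Sum>i\<in>T. a i p * (\<Sum>q\<in>J. a i q * w q))) + (\<Sum>p\<in>{..<n} - J. (w p)\<^sup>2)"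
    using J by (simp add: sum.If_cases Int_absorb1 Diff_eq)
  also have "(\<Sum>p\<in>J. w p * (\<Sum>i\<in>T. a i p * (\<Sum>q\<in>J. a i q * w q))) =
      (\<Sum>p\<in>J. \<Sum>i\<in>T. (a i p * w p) * (\<Sum>q\<in>J. a i q * w q))"
    by (simp add: sum_distrib_left mult_ac)
  also have "\<dots> = (\<Sum>i\<in>T. (\<Sum>q\<in>J. a i q * w q)\<^sup>2)"
    by (subst sum.swap) (simp add: sum_distrib_right power2_eq_square)
  finally show ?thesis .
qed

lemma det_gram_nonzero:
  assumes J: "J \<subseteq> {..<n}" and T: "finite T"
    and rigid: "\<And>w. (\<And>j. j < n \<Longrightarrow> j \<notin> J \<Longrightarrow> w j = 0) \<Longrightarrow> (\<And>i. i \<in> T \<Longrightarrow> (\<Sum>q\<in>J. a i q * w q) = 0)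
                  \<Longrightarrow> \<forall>j<n. w j = 0"
  shows "det (mat n n (\<lambda>(p, q). gram T J p q)) \<noteq> 0"
proof
  let ?G = "mat n n (\<lambda>(p, q). gram T J p q)"
  assume "det ?G = 0"
  then obtain v where v: "v \<in> carrier_vec n" "v \<noteq> 0\<^sub>v n" "?G *\<^sub>v v = 0\<^sub>v n"
    using det_0_iff_vec_prod_zero[of ?G n] by auto
  define w where "w j = v $ j" for j
  have "(\<Sum>q<n. gram T J p q * w q) = 0" if "p < n" for p
    using arg_cong[OF v(3), of "\<lambda>u. u $ p"] index_mat_mult_vec[OF that v(1)] that
    by (simp add: w_def)
  then have "(\<Sum>i\<in>T. (\<Sum>q\<in>J. a i q * w q)\<^sup>2) + (\<Sum>p\<in>{..<n} - J. (w p)\<^sup>2) = 0"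
    by (simp add: gram_quadratic_form[OF J, symmetric])
  moreover have "(\<Sum>i\<in>T. (\<Sum>q\<in>J. a i q * w q)\<^sup>2) \<ge> 0" "(\<Sum>p\<in>{..<n} - J. (w p)\<^sup>2) \<ge> 0"
    by (simp_all add: sum_nonneg)
  ultimately have "(\<Sum>i\<in>T. (\<Sum>q\<in>J. a i q * w q)\<^sup>2) = 0" "(\<Sum>p\<in>{..<n} - J. (w p)\<^sup>2) = 0"
    by linarith+
  then have "\<forall>j<n. w j = 0"
    using T by (intro rigid) (simp_all add: sum_nonneg_eq_0_iff)
  with v(1,2) show False by (auto simp: w_def)
qed

lemma gram_Ints:
  assumes "\<And>i j. i \<in> T \<Longrightarrow> j < n \<Longrightarrow> a i j \<in> \<int>" and "p < n" "q < n"
  shows "gram T J p q \<in> \<int>"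
  using assms by (auto simp: gram_def intro!: Ints_sum Ints_mult)

lemma abs_gram_le:
  fixes H :: real
  assumes T: "T \<subseteq> {..<m}" and a_le: "\<And>i j. i < m \<Longrightarrow> j < n \<Longrightarrow> \<bar>a i j\<bar> \<le> H"
    and "p < n" "q < n"
  shows "\<bar>gram T J p q\<bar> \<le> m * H\<^sup>2 + 1"
proof -
  have "\<bar>\<Sum>i\<in>T. a i p * a i q\<bar> \<le> (\<Sum>i\<in>T. H\<^sup>2)"
  proof (rule order_trans[OF sum_abs sum_mono])
    fix i assume "i \<in> T"
    with assms have "\<bar>a i p\<bar> \<le> H" "\<bar>a i q\<bar> \<le> H" by auto
    then show "\<bar>a i p * a i q\<bar> \<le> H\<^sup>2"
      unfolding abs_mult power2_eq_square by (intro mult_mono) auto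
  qed
  also have "\<dots> \<le> m * H\<^sup>2"
    using card_mono[OF _ T] by (simp add: mult_right_mono)
  finally show ?thesis by (auto simp: gram_def)
qed

lemma gram_apply_point:
  assumes "p < n"
  shows "(\<Sum>q<n. gram (tight_rows x) ({..<n} - zero_coords x) p q * x q) =
    (if x p \<noteq> 0 then \<Sum>i\<in>tight_rows x. a i p * b i else 0)"
proof -
  have "(\<Sum>q\<in>{..<n} - zero_coords x. a i q * x q) = lhs x i" for i
    unfolding lhs_def by (intro sum.mono_neutral_left) (auto simp: zero_coords_def)
  then show ?thesis
    using assms by (simp add: gram_apply zero_coords_def tight_rows_def)
qed

lemma abs_gram_apply_point_le:
  fixes H R :: real
  assumes a_le: "\<And>i j. i < m \<Longrightarrow> j < n \<Longrightarrow> \<bar>a i j\<bar> \<le> H"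
    and b_le: "\<And>i. i < m \<Longrightarrow> \<bar>b i\<bar> \<le> R" and H: "0 \<le> H" and R: "0 \<le> R" and p: "p < n"
  shows "\<bar>\<Sum>q<n. gram (tight_rows x) ({..<n} - zero_coords x) p q * x q\<bar> \<le> m * H * R"
proof -
  have T: "tight_rows x \<subseteq> {..<m}" unfolding tight_rows_def by auto
  have "\<bar>\<Sum>i\<in>tight_rows x. a i p * b i\<bar> \<le> (\<Sum>i\<in>tight_rows x. H * R)"
  proof (rule order_trans[OF sum_abs sum_mono])
    fix i assume "i \<in> tight_rows x"
    with T a_le b_le p have "\<bar>a i p\<bar> \<le> H" "\<bar>b i\<bar> \<le> R" by auto
    then show "\<bar>a i p * b i\<bar> \<le> H * R" unfolding abs_mult using H by (intro mult_mono) auto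
  qed
  also have "\<dots> \<le> m * H * R"
    using card_mono[OF _ T] H R by (simp add: mult_right_mono mult.assoc)
  finally show ?thesis using H R by (simp add: gram_apply_point[OF p])
qed

lemma det_gram_maximal_nonzero:
  assumes feas: "feasible x" and maximal: "\<And>y. feasible y \<Longrightarrow> active_count y \<le> active_count x"
  shows "det (mat n n (\<lambda>(p, q). gram (tight_rows x) ({..<n} - zero_coords x) p q)) \<noteq> 0"
proof (rule det_gram_nonzero[OF _ finite_tight_rows])
  fix w assume "\<And>j. j < n \<Longrightarrow> j \<notin> {..<n} - zero_coords x \<Longrightarrow> w j = 0"
    and "\<And>i. i \<in> tight_rows x \<Longrightarrow> (\<Sum>q\<in>{..<n} - zero_coords x. a i q * w q) = 0"
  moreover from this have "(\<Sum>q\<in>{..<n} - zero_coords x. a i q * w q) = lhs w i" for i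
    unfolding lhs_def by (intro sum.mono_neutral_left) (auto simp: zero_coords_def)
  ultimately show "\<forall>j<n. w j = 0"
    using maximal_feasible_rigid[OF feas maximal] by (auto simp: zero_coords_def)
qed auto

theorem small_solution:
  fixes H R :: real
  assumes ints: "\<And>i j. i < m \<Longrightarrow> j < n \<Longrightarrow> a i j \<in> \<int>"
    and a_le: "\<And>i j. i < m \<Longrightarrow> j < n \<Longrightarrow> \<bar>a i j\<bar> \<le> H"
    and b_le: "\<And>i. i < m \<Longrightarrow> \<bar>b i\<bar> \<le> R"
    and H: "0 \<le> H" and R: "0 \<le> R" and "feasible x0"
  obtains x where "feasible x" "\<And>j. j < n \<Longrightarrow> \<bar>x j\<bar> \<le> (m * H * R + 1) * fact n * (m * H\<^sup>2 + 1) ^ n"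
proof -
  obtain x where feas: "feasible x" and maximal: "\<And>y. feasible y \<Longrightarrow> active_count y \<le> active_count x"
    using maximal_feasible_exists[OF \<open>feasible x0\<close>] by blast
  define G where "G = mat n n (\<lambda>(p, q). gram (tight_rows x) ({..<n} - zero_coords x) p q)"
  define Y where "Y = m * H * R + 1"
  define h where "h = m * H\<^sup>2 + 1"
  have Y1: "1 \<le> Y" and h1: "1 \<le> h" using H R by (simp_all add: Y_def h_def)
  have T: "tight_rows x \<subseteq> {..<m}" unfolding tight_rows_def by auto
  have G: "G \<in> carrier_mat n n" unfolding G_def by simp
  have "det G \<noteq> 0" unfolding G_def by (rule det_gram_maximal_nonzero[OF feas maximal])
  moreover have "\<forall>i<n. \<forall>j<n. G $$ (i, j) \<in> \<int>"
    using T ints by (auto simp: G_def intro!: gram_Ints)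
  moreover have "\<forall>i<n. \<forall>j<n. \<bar>G $$ (i, j)\<bar> \<le> h"
    using T a_le by (auto simp: G_def h_def intro!: abs_gram_le)
  moreover have "\<bar>(G *\<^sub>v vec n (\<lambda>j. x j / Y)) $ p\<bar> \<le> h" if p: "p < n" for p
  proof -
    have "(G *\<^sub>v vec n (\<lambda>j. x j / Y)) $ p = (\<Sum>q<n. gram (tight_rows x) ({..<n} - zero_coords x) p q * x q) / Y"
      unfolding G_def using p by (subst index_mat_mult_vec) (auto simp: sum_divide_distrib)
    moreover have "m * H * R \<le> Y" unfolding Y_def by simp
    ultimately have "\<bar>(G *\<^sub>v vec n (\<lambda>j. x j / Y)) $ p\<bar> \<le> 1"
      using abs_gram_apply_point_le[OF a_le b_le H R p, of x] Y1 by (simp add: abs_divide divide_le_eq)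
    with h1 show ?thesis by linarith
  qed
  ultimately have "\<bar>vec n (\<lambda>j. x j / Y) $ k\<bar> \<le> fact n * h ^ n" if "k < n" for k
    using that by (intro abs_index_le_by_cramer[OF G]) auto
  then have "\<bar>x k\<bar> \<le> Y * fact n * h ^ n" if "k < n" for k
    using that Y1 by (simp add: abs_divide divide_le_eq mult_ac)
  with feas show ?thesis unfolding Y_def h_def by (rule that)
qed

end

section \<open>The slice of the polyhedron through x*\<close>

lemma polyhedron_iff:
  assumes "A \<in> carrier_mat m n" "b \<in> carrier_vec m"
  shows "x \<in> polyhedron n A b \<longleftrightarrow>
    x \<in> carrier_vec n \<and> (\<forall>i<m. (\<Sum>j<n. of_rat (A $$ (i, j)) * x $ j) \<le> of_rat (b $ i))"
  using assms unfolding polyhedron_def less_eq_vec_def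
  by (auto simp: scalar_prod_def lessThan_atLeast0 intro: sum.cong)

definition stack_rows :: "nat \<Rightarrow> nat \<Rightarrow> (nat \<Rightarrow> 'a) \<Rightarrow> (nat \<Rightarrow> 'a) \<Rightarrow> nat \<Rightarrow> 'a :: uminus" where
  "stack_rows m k f g i = (if i < m then f i else if i < m + k then g (i - m) else - g (i - m - k))"

lemma all_stack_rows_iff:
  "(\<forall>i<m + 2 * k. P (stack_rows m k f g i) (stack_rows m k f' g' i)) \<longleftrightarrow>
    (\<forall>i<m. P (f i) (f' i)) \<and> (\<forall>l<k. P (g l) (g' l) \<and> P (- g l) (- g' l))"
proof
  assume all: "\<forall>i<m + 2 * k. P (stack_rows m k f g i) (stack_rows m k f' g' i)"
  have "P (f i) (f' i)" if "i < m" for i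
    using all[rule_format, of i] that by (simp add: stack_rows_def)
  moreover have "P (g l) (g' l) \<and> P (- g l) (- g' l)" if "l < k" for l
    using all[rule_format, of "m + l"] all[rule_format, of "m + k + l"] that by (simp add: stack_rows_def)
  ultimately show "(\<forall>i<m. P (f i) (f' i)) \<and> (\<forall>l<k. P (g l) (g' l) \<and> P (- g l) (- g' l))" by blast
next
  assume blocks: "(\<forall>i<m. P (f i) (f' i)) \<and> (\<forall>l<k. P (g l) (g' l) \<and> P (- g l) (- g' l))"
  show "\<forall>i<m + 2 * k. P (stack_rows m k f g i) (stack_rows m k f' g' i)"
  proof (intro allI impI)
    fix i assume i: "i < m + 2 * k"
    consider "i < m" | "m \<le> i" "i < m + k" | "m + k \<le> i" by linarith
    then show "P (stack_rows m k f g i) (stack_rows m k f' g' i)"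
      using blocks i by cases (auto simp: stack_rows_def)
  qed
qed

definition slice_rows :: "rat mat \<Rightarrow> rat vec list \<Rightarrow> nat \<Rightarrow> nat \<Rightarrow> rat" where
  "slice_rows A xs = stack_rows (dim_row A) (length xs) (\<lambda>i j. A $$ (i, j)) (\<lambda>l j. xs ! l $ j)"

definition slice_rhs :: "rat vec \<Rightarrow> rat vec list \<Rightarrow> real vec \<Rightarrow> nat \<Rightarrow> real" where
  "slice_rhs b xs y = stack_rows (dim_vec b) (length xs) (\<lambda>i. of_rat (b $ i)) (\<lambda>l. y \<bullet> map_vec of_rat (xs ! l))"

lemma slice_system_iff:
  assumes A: "A \<in> carrier_mat m n" and b: "b \<in> carrier_vec m" and xs: "set xs \<subseteq> carrier_vec n"
    and x: "x \<in> carrier_vec n" and D: "0 < D"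
  shows "ineq_system.feasible (\<lambda>i j. D * of_rat (slice_rows A xs i j)) (\<lambda>i. D * slice_rhs b xs y i)
      (m + 2 * length xs) n (\<lambda>j. x $ j) \<longleftrightarrow>
    x \<in> polyhedron n A b \<and> (\<forall>l<length xs. x \<bullet> map_vec of_rat (xs ! l) = y \<bullet> map_vec of_rat (xs ! l))"
proof -
  have "x \<bullet> map_vec of_rat (xs ! l) = (\<Sum>j<n. of_rat (xs ! l $ j) * x $ j)" if "l < length xs" for l
    using xs that by (intro scalar_prod_map_of_rat_right) (auto dest: nth_mem)
  moreover have "dim_row A = m" "dim_vec b = m" using A b by auto
  ultimately show ?thesis
    using all_stack_rows_iff[where P = "\<lambda>r \<beta>. (\<Sum>j<n. of_rat (r j) * x $ j) \<le> \<beta>" and m = m and k = "length xs"] D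
    unfolding ineq_system.feasible_def ineq_system.lhs_def slice_rows_def slice_rhs_def polyhedron_iff[OF A b]
    by (auto simp: of_rat_minus sum_negf x mult.assoc sum_distrib_left[symmetric])
qed

lemma abs_slice_rows_le:
  assumes A: "A \<in> carrier_mat m n" and xs: "set xs \<subseteq> carrier_vec n"
    and i: "i < m + 2 * length xs" and j: "j < n"
  shows "\<bar>real_of_rat (slice_rows A xs i j)\<bar> \<le> 2 ^ (bl_mat A + bl_list xs)"
proof -
  let ?bounded = "\<lambda>r. \<forall>j<n. \<bar>real_of_rat (r j)\<bar> \<le> 2 ^ (bl_mat A + bl_list xs)"
  have "?bounded (\<lambda>j. A $$ (i, j))" if "i < m" for i
    using bl_mat_index[of i A] A that
    by (auto simp del: abs_of_rat intro!: abs_of_rat_le_two_power intro: trans_le_add1)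
  moreover have "?bounded (\<lambda>j. xs ! l $ j)" if "l < length xs" for l
    using bl_vec_index[of _ "xs ! l"] bl_list_nth[of l xs] xs that
    by (force simp del: abs_of_rat dest: nth_mem intro!: abs_of_rat_le_two_power intro: trans_le_add2)
  ultimately have "\<forall>i<m + 2 * length xs. ?bounded (slice_rows A xs i)"
    using all_stack_rows_iff[where P = "\<lambda>r _. ?bounded r" and m = m and k = "length xs"
        and f' = "\<lambda>i j. A $$ (i, j)" and g' = "\<lambda>l j. xs ! l $ j"] A
    unfolding slice_rows_def by (auto simp del: abs_of_rat simp: of_rat_minus)
  with i j show ?thesis by blast
qed

lemma slice_common_denominator:
  assumes A: "A \<in> carrier_mat m n" and xs: "set xs \<subseteq> carrier_vec n"
  obtains D :: int where "0 < D" "real_of_int D \<le> 2 ^ (bl_mat A + bl_list xs)"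
    "\<And>i j. i < m + 2 * length xs \<Longrightarrow> j < n \<Longrightarrow> real_of_int D * of_rat (slice_rows A xs i j) \<in> \<int>"
proof -
  obtain DA :: int where DA: "0 < DA" "real_of_int DA \<le> 2 ^ (\<Sum>i<m. \<Sum>j<n. bl_rat (A $$ (i, j)))"
    "\<And>i j. i < m \<Longrightarrow> j < n \<Longrightarrow> real_of_int DA * of_rat (A $$ (i, j)) \<in> \<int>"
    using common_denominator[where f = "\<lambda>i j. A $$ (i, j)" and p = m and q = n] by blast
  obtain DX :: int where DX: "0 < DX" "real_of_int DX \<le> 2 ^ (\<Sum>l<length xs. \<Sum>j<n. bl_rat (xs ! l $ j))"
    "\<And>l j. l < length xs \<Longrightarrow> j < n \<Longrightarrow> real_of_int DX * of_rat (xs ! l $ j) \<in> \<int>"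
    using common_denominator[where f = "\<lambda>l j. xs ! l $ j" and p = "length xs" and q = n] by blast
  have "(\<Sum>i<m. \<Sum>j<n. bl_rat (A $$ (i, j))) = bl_mat A" using A by (simp add: bl_mat_def)
  moreover have "(\<Sum>l<length xs. \<Sum>j<n. bl_rat (xs ! l $ j)) = bl_list xs"
    using xs by (auto simp: bl_list_sum bl_vec_def dest: nth_mem intro!: sum.cong)
  ultimately have "real_of_int (DA * DX) \<le> 2 ^ bl_mat A * 2 ^ bl_list xs"
    using DA DX by (simp add: mult_mono)
  then have bound: "real_of_int (DA * DX) \<le> 2 ^ (bl_mat A + bl_list xs)" by (simp add: power_add)
  let ?integral = "\<lambda>r. \<forall>j<n. real_of_int (DA * DX) * of_rat (r j) \<in> \<int>"
  have "real_of_int (DA * DX) * of_rat r = of_int DX * (of_int DA * of_rat r)"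
    "real_of_int (DA * DX) * of_rat r = of_int DA * (of_int DX * of_rat r)" for r
    by simp_all
  then have "?integral (\<lambda>j. A $$ (i, j))" if "i < m" for i
    using DA(3) that by (metis Ints_mult Ints_of_int)
  moreover have "?integral (\<lambda>j. xs ! l $ j)" if "l < length xs" for l
    using DX(3) that \<open>\<And>r. _ = of_int DA * (of_int DX * of_rat r)\<close> by (metis Ints_mult Ints_of_int)
  ultimately have "\<forall>i<m + 2 * length xs. ?integral (slice_rows A xs i)"
    using all_stack_rows_iff[where P = "\<lambda>r _. ?integral r" and m = m and k = "length xs"
        and f' = "\<lambda>i j. A $$ (i, j)" and g' = "\<lambda>l j. xs ! l $ j"] A
    unfolding slice_rows_def by (auto simp: of_rat_minus)
  with bound show thesis using DA(1) DX(1) that[of "DA * DX"] by auto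
qed

lemma abs_slice_rhs_le:
  assumes b: "b \<in> carrier_vec m" and xs: "set xs \<subseteq> carrier_vec n"
    and orth: "\<forall>i<length xs. \<forall>j<length xs. i \<noteq> j \<longrightarrow> xs ! i \<bullet> xs ! j = 0"
    and y: "y \<in> carrier_vec n" and i: "i < m + 2 * length xs"
  shows "\<bar>slice_rhs b xs y i\<bar> \<le> 2 ^ bl_vec b + n * (vnorm (orth_proj n (lin_span n xs) y) * 2 ^ bl_list xs)"
proof -
  let ?z = "orth_proj n (lin_span n xs) y"
  let ?bound = "2 ^ bl_vec b + n * (vnorm ?z * 2 ^ bl_list xs)"
  have z: "?z \<in> lin_span n xs" "\<And>l. l < length xs \<Longrightarrow> ?z \<bullet> map_vec of_rat (xs ! l) = y \<bullet> map_vec of_rat (xs ! l)"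
    using orth_proj_orthogonal_list[OF xs orth y] by auto
  have "0 \<le> n * (vnorm ?z * 2 ^ bl_list xs)" by (simp add: vnorm_def scalar_prod_self_nonneg)
  moreover have "\<bar>of_rat (b $ i)\<bar> \<le> (2::real) ^ bl_vec b" if "i < m" for i
    using b that by (intro abs_of_rat_le_two_power bl_vec_index) auto
  ultimately have "\<bar>of_rat (b $ i)\<bar> \<le> ?bound" if "i < m" for i
    using that by (meson add_increasing2)
  moreover have "\<bar>y \<bullet> map_vec of_rat (xs ! l)\<bar> \<le> ?bound" if l: "l < length xs" for l
  proof -
    have xl: "xs ! l \<in> carrier_vec n" using xs l by (auto dest: nth_mem)
    have "\<bar>?z \<bullet> map_vec of_rat (xs ! l)\<bar> \<le> n * (vnorm ?z * 2 ^ bl_list xs)"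
    proof (rule abs_scalar_prod_le)
      show "\<bar>?z $ j\<bar> \<le> vnorm ?z" if "j < n" for j
        using that lin_span_carrier[OF z(1)] by (intro abs_index_le_vnorm) auto
      show "\<bar>map_vec real_of_rat (xs ! l) $ j\<bar> \<le> 2 ^ bl_list xs" if "j < n" for j
        using that xl bl_vec_index[of j "xs ! l"] bl_list_nth[OF l]
        by (auto simp del: abs_of_rat intro!: abs_of_rat_le_two_power)
    qed (use xl in auto)
    then show ?thesis using z(2)[OF l] by (simp add: add_increasing)
  qed
  ultimately show ?thesis
    using all_stack_rows_iff[where P = "\<lambda>_ \<beta>. \<bar>\<beta>\<bar> \<le> ?bound" and m = m and k = "length xs"
        and f = "\<lambda>i. of_rat (b $ i)" and g = "\<lambda>l. y \<bullet> map_vec of_rat (xs ! l)"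
        and f' = "\<lambda>i. of_rat (b $ i)" and g' = "\<lambda>l. y \<bullet> map_vec of_rat (xs ! l)"] b i
    unfolding slice_rhs_def by auto
qed

lemma abs_slice_rhs_le_square:
  fixes P :: real
  assumes b: "b \<in> carrier_vec m" and xs: "set xs \<subseteq> carrier_vec n"
    and orth: "\<forall>i<length xs. \<forall>j<length xs. i \<noteq> j \<longrightarrow> xs ! i \<bullet> xs ! j = 0"
    and y: "y \<in> carrier_vec n" and i: "i < m + 2 * length xs"
    and P: "2 ^ bl_vec b \<le> P" "2 ^ bl_list xs \<le> P" "real n \<le> P" "1 \<le> P"
  shows "\<bar>slice_rhs b xs y i\<bar> \<le> P\<^sup>2 * (1 + vnorm (orth_proj n (lin_span n xs) y))"
proof -
  let ?z = "vnorm (orth_proj n (lin_span n xs) y)"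
  have "0 \<le> ?z" unfolding vnorm_def by (simp add: scalar_prod_self_nonneg)
  then have "n * (?z * 2 ^ bl_list xs) \<le> P * (?z * P)"
    using P by (intro mult_mono) (auto intro: mult_left_mono)
  moreover have "P \<le> P * P" using P(4) by simp
  moreover have "P\<^sup>2 * (1 + ?z) = P * P + P * (?z * P)" by (simp add: power2_eq_square algebra_simps)
  ultimately show ?thesis using abs_slice_rhs_le[OF b xs orth y i] P(1) by linarith
qed

lemma slice_small_solution:
  fixes P :: real
  assumes A: "A \<in> carrier_mat m n" and b: "b \<in> carrier_vec m" and xs: "set xs \<subseteq> carrier_vec n"
    and orth: "\<forall>i<length xs. \<forall>j<length xs. i \<noteq> j \<longrightarrow> xs ! i \<bullet> xs ! j = 0"
    and xstar: "xstar \<in> polyhedron n A b"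
    and P: "2 ^ (bl_mat A + bl_list xs) \<le> P" "2 ^ bl_vec b \<le> P" "real n \<le> P"
  defines "M \<equiv> m + 2 * length xs" and "z \<equiv> vnorm (orth_proj n (lin_span n xs) xstar)"
  obtains x' where "x' \<in> polyhedron n A b"
    "orth_proj n (lin_span n xs) x' = orth_proj n (lin_span n xs) xstar"
    "\<And>j. j < n \<Longrightarrow> \<bar>x' $ j\<bar> \<le> (M * P\<^sup>2 * (P ^ 3 * (1 + z)) + 1) * fact n * (M * (P\<^sup>2)\<^sup>2 + 1) ^ n"
proof -
  have xstar_c: "xstar \<in> carrier_vec n" using xstar unfolding polyhedron_def by auto
  have z: "0 \<le> z" unfolding z_def vnorm_def by (simp add: scalar_prod_self_nonneg)
  have P1: "1 \<le> P" using P(1) by (meson dual_order.trans one_le_power one_le_numeral)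
  obtain D :: int where D: "0 < D" "real_of_int D \<le> 2 ^ (bl_mat A + bl_list xs)"
    "\<And>i j. i < M \<Longrightarrow> j < n \<Longrightarrow> real_of_int D * of_rat (slice_rows A xs i j) \<in> \<int>"
    using slice_common_denominator[OF A xs] unfolding M_def by blast
  have DP: "0 < real_of_int D" "real_of_int D \<le> P" using D(1) order_trans[OF D(2) P(1)] by auto
  interpret S: ineq_system "\<lambda>i j. of_int D * of_rat (slice_rows A xs i j)" "\<lambda>i. of_int D * slice_rhs b xs xstar i" M n .
  have feasible_iff: "S.feasible (\<lambda>j. x $ j) \<longleftrightarrow> x \<in> polyhedron n A b \<and>
      (\<forall>l<length xs. x \<bullet> map_vec of_rat (xs ! l) = xstar \<bullet> map_vec of_rat (xs ! l))"
    if "x \<in> carrier_vec n" for x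
    using slice_system_iff[OF A b xs that DP(1)] unfolding M_def .
  have a_le: "\<bar>of_int D * of_rat (slice_rows A xs i j)\<bar> \<le> P\<^sup>2" if "i < M" "j < n" for i j
    using abs_slice_rows_le[OF A xs, of i j] DP P(1) that unfolding M_def power2_eq_square abs_mult
    by (intro mult_mono) auto
  have b_le: "\<bar>of_int D * slice_rhs b xs xstar i\<bar> \<le> P ^ 3 * (1 + z)" if "i < M" for i
  proof -
    have "(2::real) ^ bl_list xs \<le> P" using P(1) by (meson le_add2 one_le_numeral order_trans power_increasing)
    then have "\<bar>of_int D * slice_rhs b xs xstar i\<bar> \<le> P * (P\<^sup>2 * (1 + z))"
      using abs_slice_rhs_le_square[OF b xs orth xstar_c, of i P] that P(2,3) P1 DP
      unfolding abs_mult M_def z_def by (intro mult_mono) auto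
    then show ?thesis by (simp add: power2_eq_square power3_eq_cube mult.assoc)
  qed
  have "S.feasible (\<lambda>j. xstar $ j)" using feasible_iff[OF xstar_c] xstar by simp
  moreover have "0 \<le> P ^ 3 * (1 + z)" using P1 z by simp
  ultimately obtain x where feas: "S.feasible x"
    and x_le: "\<And>j. j < n \<Longrightarrow> \<bar>x j\<bar> \<le> (M * P\<^sup>2 * (P ^ 3 * (1 + z)) + 1) * fact n * (M * (P\<^sup>2)\<^sup>2 + 1) ^ n"
    using S.small_solution[OF D(3) a_le b_le zero_le_power2] by blast
  then have "vec n x \<in> polyhedron n A b"
    "\<forall>l<length xs. vec n x \<bullet> map_vec of_rat (xs ! l) = xstar \<bullet> map_vec of_rat (xs ! l)"
    using feasible_iff[of "vec n x"] S.feasible_vec[of x] by auto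
  with x_le show thesis
    by (intro that[of "vec n x"] orth_proj_cong[OF xs orth _ xstar_c]) auto
qed

lemma small_solution_bound_le_power:
  fixes P z :: real and n M N :: nat
  assumes P: "2 \<le> P" and z: "0 \<le> z" and nN: "n \<le> N" and nP: "real n \<le> P" and MP: "real M \<le> P\<^sup>2"
  shows "n * ((M * P\<^sup>2 * (P ^ 3 * (1 + z)) + 1) * fact n * (M * (P\<^sup>2)\<^sup>2 + 1) ^ n)
    \<le> P ^ (8 * N + 9) * (1 + z)"
proof -
  have P1: "1 \<le> P ^ k" for k using P by (simp add: one_le_power)
  have P_double: "2 * P ^ k \<le> P ^ Suc k" for k using P by (simp add: mult_right_mono)
  have "M * P\<^sup>2 * (P ^ 3 * (1 + z)) \<le> P\<^sup>2 * P\<^sup>2 * (P ^ 3 * (1 + z))"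
    using MP P z by (intro mult_right_mono) auto
  moreover have "1 * 1 \<le> P ^ 7 * (1 + z)" using P1[of 7] P z by (intro mult_mono) auto
  ultimately have "M * P\<^sup>2 * (P ^ 3 * (1 + z)) + 1 \<le> 2 * P ^ 7 * (1 + z)"
    by (simp add: power_add[symmetric] mult.assoc)
  also have "\<dots> \<le> P ^ 8 * (1 + z)" using P_double[of 7] z by (intro mult_right_mono) auto
  finally have first: "M * P\<^sup>2 * (P ^ 3 * (1 + z)) + 1 \<le> P ^ 8 * (1 + z)" .
  have "(fact n :: real) \<le> real n ^ n" by (metis fact_le_power of_nat_fact of_nat_le_iff of_nat_power)
  also have "\<dots> \<le> P ^ n" using nP by (intro power_mono) auto
  also have "\<dots> \<le> P ^ N" using P nN by (intro power_increasing) auto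
  finally have second: "fact n \<le> P ^ N" .
  have "M * (P\<^sup>2)\<^sup>2 \<le> P\<^sup>2 * (P\<^sup>2)\<^sup>2" using MP by (intro mult_right_mono) auto
  then have "M * (P\<^sup>2)\<^sup>2 + 1 \<le> 2 * P ^ 6" using P1[of 6] by (simp add: power_add[symmetric] power_mult[symmetric])
  also have "\<dots> \<le> P ^ 7" using P_double[of 6] by simp
  finally have "(M * (P\<^sup>2)\<^sup>2 + 1) ^ n \<le> (P ^ 7) ^ n" by (intro power_mono) auto
  also have "\<dots> \<le> (P ^ 7) ^ N" using P nN by (intro power_increasing) auto
  finally have third: "(M * (P\<^sup>2)\<^sup>2 + 1) ^ n \<le> P ^ (7 * N)" by (simp add: power_mult)
  have "n * ((M * P\<^sup>2 * (P ^ 3 * (1 + z)) + 1) * fact n * (M * (P\<^sup>2)\<^sup>2 + 1) ^ n)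
      \<le> P ^ 1 * (P ^ 8 * (1 + z) * P ^ N * P ^ (7 * N))"
    using nP first second third P z by (intro mult_mono) auto
  also have "\<dots> = P ^ (8 * N + 9) * (1 + z)"
  proof -
    have "8 * N + 9 = 1 + 8 + N + 7 * N" by simp
    then show ?thesis by (simp only: power_add) (simp add: mult_ac)
  qed
  finally show ?thesis .
qed

lemma small_point_in_slice:
  assumes A: "A \<in> carrier_mat m n" and b: "b \<in> carrier_vec m" and xs: "set xs \<subseteq> carrier_vec n"
    and orth: "\<forall>i<length xs. \<forall>j<length xs. i \<noteq> j \<longrightarrow> xs ! i \<bullet> xs ! j = 0"
    and xstar: "xstar \<in> polyhedron n A b"
  defines "N \<equiv> enc_poly n A b + bl_list xs" and "z \<equiv> vnorm (orth_proj n (lin_span n xs) xstar)"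
  obtains x' where "x' \<in> polyhedron n A b"
    "orth_proj n (lin_span n xs) x' = orth_proj n (lin_span n xs) xstar"
    "vnorm x' \<le> (2 ^ N) ^ (8 * N + 9) * (1 + z)"
proof (cases "n = 0")
  case True
  then have "vnorm xstar = 0" using xstar by (auto simp: polyhedron_def vnorm_def scalar_prod_def)
  moreover have "0 \<le> z" unfolding z_def vnorm_def by (simp add: scalar_prod_self_nonneg)
  ultimately show thesis using xstar by (intro that) auto
next
  case False
  define P :: real where "P = 2 ^ N"
  have sizes: "n \<le> N" "m \<le> enc_poly n A b" "bl_mat A + bl_list xs \<le> N" "bl_vec b \<le> N"
    using dim_vec_le_bl_vec[of b] b unfolding N_def enc_poly_def by auto
  define M where "M = m + 2 * length xs"
  have "M \<le> 2 * N" using length_le_bl_list[OF xs] False sizes(2) unfolding M_def N_def by simp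
  have power_le_P: "2 ^ k \<le> P" if "k \<le> N" for k
    unfolding P_def using that by (intro power_increasing) auto
  have NP: "real N \<le> P" unfolding P_def using of_nat_less_two_power[of N] by simp
  have P2: "2 \<le> P" using power_le_P[of 1] sizes(1) False by simp
  have nP: "real n \<le> P" using NP sizes(1) by linarith
  have MP: "real M \<le> P\<^sup>2"
  proof -
    have "real M \<le> 2 * P" using \<open>M \<le> 2 * N\<close> NP by linarith
    also have "\<dots> \<le> P\<^sup>2" using P2 by (simp add: power2_eq_square mult_right_mono)
    finally show ?thesis .
  qed
  obtain x' where x': "x' \<in> polyhedron n A b"
    "orth_proj n (lin_span n xs) x' = orth_proj n (lin_span n xs) xstar"
    "\<And>j. j < n \<Longrightarrow> \<bar>x' $ j\<bar> \<le> (M * P\<^sup>2 * (P ^ 3 * (1 + z)) + 1) * fact n * (M * (P\<^sup>2)\<^sup>2 + 1) ^ n"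
    using slice_small_solution[OF A b xs orth xstar power_le_P[OF sizes(3)] power_le_P[OF sizes(4)] nP]
    unfolding M_def z_def by blast
  have z: "0 \<le> z" unfolding z_def vnorm_def by (simp add: scalar_prod_self_nonneg)
  have "vnorm x' \<le> n * ((M * P\<^sup>2 * (P ^ 3 * (1 + z)) + 1) * fact n * (M * (P\<^sup>2)\<^sup>2 + 1) ^ n)"
    using x'(1) by (intro vnorm_le_of_abs_le[OF _ x'(3)]) (simp add: polyhedron_def)
  also have "\<dots> \<le> P ^ (8 * N + 9) * (1 + z)"
    by (rule small_solution_bound_le_power[OF P2 z sizes(1) nP MP])
  finally show thesis using x' unfolding P_def by (intro that) auto
qed

lemma poly2_affine_in_first: "poly2 (\<lambda>i j. if j = 1 then 1 else 0) 1 s t = t * (1 + s)"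
  unfolding poly2_def by (simp add: numeral_eq_Suc atMost_Suc algebra_simps)

lemma quadratic_le_poly2:
  assumes "0 \<le> x" "0 \<le> y"
  shows "(x + y) * (8 * (x + y) + 9) \<le> poly2 (\<lambda>i j. 40) 2 x y"
proof -
  have "poly2 (\<lambda>i j. 40) 2 x y = 40 * (1 + y + y\<^sup>2 + x + x * y + x * y\<^sup>2 + x\<^sup>2 + x\<^sup>2 * y + x\<^sup>2 * y\<^sup>2)"
    unfolding poly2_def by (simp add: numeral_eq_Suc atMost_Suc algebra_simps)
  moreover have "0 \<le> x * y\<^sup>2" "0 \<le> x\<^sup>2 * y" "0 \<le> x\<^sup>2 * y\<^sup>2" "0 \<le> x * y"
    using assms by simp_all
  ultimately show ?thesis using assms by (simp add: algebra_simps power2_eq_square)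
qed

lemma small_point_poly2_bound:
  assumes A: "A \<in> carrier_mat m n" and b: "b \<in> carrier_vec m" and xs: "\<forall>v \<in> set xs. v \<in> carrier_vec n"
    and orth: "\<forall>i<length xs. \<forall>j<length xs. i \<noteq> j \<longrightarrow> xs ! i \<bullet> xs ! j = 0"
    and xstar: "xstar \<in> polyhedron n A b"
  shows "\<exists>x' \<in> polyhedron n A b.
    orth_proj n (lin_span n xs) x' = orth_proj n (lin_span n xs) xstar \<and>
    vnorm x' \<le> poly2 (\<lambda>i j. if j = 1 then 1 else 0) 1 (vnorm (orth_proj n (lin_span n xs) xstar))
                 (2 powr poly2 (\<lambda>i j. 40) 2 (real (enc_poly n A b)) (real (bl_list xs)))"
proof -
  define N where "N = enc_poly n A b + bl_list xs"
  define z where "z = vnorm (orth_proj n (lin_span n xs) xstar)"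
  obtain x' where x': "x' \<in> polyhedron n A b"
    "orth_proj n (lin_span n xs) x' = orth_proj n (lin_span n xs) xstar"
    "vnorm x' \<le> (2 ^ N) ^ (8 * N + 9) * (1 + z)"
    using small_point_in_slice[OF A b _ orth xstar] xs unfolding N_def z_def by blast
  have z_nonneg: "0 \<le> z" unfolding z_def vnorm_def by (simp add: scalar_prod_self_nonneg)
  have "((2::real) ^ N) ^ (8 * N + 9) = 2 powr real (N * (8 * N + 9))"
    unfolding power_mult[symmetric] by (rule powr_realpow[symmetric]) simp
  also have "\<dots> \<le> 2 powr poly2 (\<lambda>i j. 40) 2 (real (enc_poly n A b)) (real (bl_list xs))"
    using quadratic_le_poly2[of "real (enc_poly n A b)" "real (bl_list xs)"] unfolding N_def by simp
  finally have "(2 ^ N) ^ (8 * N + 9) * (1 + z) \<le>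
      2 powr poly2 (\<lambda>i j. 40) 2 (real (enc_poly n A b)) (real (bl_list xs)) * (1 + z)"
    using z_nonneg by (intro mult_right_mono) auto
  with x'(3) have "vnorm x' \<le> 2 powr poly2 (\<lambda>i j. 40) 2 (real (enc_poly n A b)) (real (bl_list xs)) * (1 + z)"
    by linarith
  with x' show ?thesis unfolding poly2_affine_in_first z_def by blast
qed

theorem lemma5p3:
  shows "\<exists>(c1 :: nat \<Rightarrow> nat \<Rightarrow> real) d1 (c2 :: nat \<Rightarrow> nat \<Rightarrow> real) d2.
    \<forall>(n :: nat) (m :: nat) (A :: rat mat) (b :: rat vec) (xs :: rat vec list) (xstar :: real vec).
      A \<in> carrier_mat m n \<longrightarrow> b \<in> carrier_vec m \<longrightarrow>
      polyhedron n A b \<noteq> {} \<longrightarrow>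
      (\<forall>v \<in> set xs. v \<in> carrier_vec n) \<longrightarrow>
      (\<forall>i < length xs. \<forall>j < length xs. i \<noteq> j \<longrightarrow> xs ! i \<bullet> xs ! j = 0) \<longrightarrow>
      xstar \<in> polyhedron n A b \<longrightarrow>
      (\<exists>x' \<in> polyhedron n A b.
         orth_proj n (lin_span n xs) x' = orth_proj n (lin_span n xs) xstar \<and>
         vnorm x' \<le> poly2 c1 d1 (vnorm (orth_proj n (lin_span n xs) xstar))
                      (2 powr poly2 c2 d2 (real (enc_poly n A b)) (real (bl_list xs))))"
  by (intro exI allI impI) (rule small_point_poly2_bound)

end
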